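(* Let $\Pi=(\mathsf A,\mathsf B)$ be a protocol and let $M^{\mathsf A}_\Pi$ be its $\mathsf A$-dominated measure. Then $\mathrm{Best}_{\mathsf B}(\Pi)=1-\mathbb E_{\ell\leftarrow L_\Pi}[M^{\mathsf A}_\Pi(\ell)]$.
   Context: An $m$-round single-bit-message protocol $\Pi$ is identified with the complete binary tree of height $m$ (nodes: binary strings of length $\le m$, root $\lambda$), with a control scheme, edge probabilities $e_\Pi(u,ub)$, common output $\chi_\Pi:\text{leaves}\to\{0,1\}$, node-visit probabilities $v_\Pi(u)$ and leaf distribution $L_\Pi$. For $b\in\{0,1\}$, $\Pi_b$ is the subprotocol on the subtree rooted at $b$ (the protocol conditioned on the first bit being $b$); its leaves are identified with leaves of $\Pi$ starting with $b$. Expectations over $L_\perp$ (undefined protocol) are $0$. The $\mathsf A$-dominated measure $M^{\mathsf A}_\Pi:\text{leaves}\to[0,1]$: if $\Pi$ has $0$ rounds with single leaf $\ell$, $M^{\mathsf A}_\Pi(\ell)=\chi_\Pi(\ell)$; otherwise, for a leaf $\ell$ with first bit $b=\ell_1$, writing $\mu_c=\mathbb E_{L_{\Pi_c}}[M^{\mathsf A}_{\Pi_c}]$: $M^{\mathsf A}_\Pi(\ell)=0$ if $e_\Pi(\lambda,b)=0$; $=M^{\mathsf A}_{\Pi_b}(\ell)$ if $e_\Pi(\lambda,b)=1$; $=M^{\mathsf A}_{\Pi_b}(\ell)$ if $e_\Pi(\lambda,b)\in(0,1)$ and ($\mathsf A$ controls the root or $\mu_b\le\mu_{1-b}$); and $=\frac{\mu_{1-b}}{\mu_b}M^{\mathsf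 A}_{\Pi_b}(\ell)$ otherwise. A deterministic strategy $\mathsf B'$ for $\mathsf B$ is valid if $v_\Pi(u)=0\Rightarrow v_{(\mathsf A,\mathsf B')}(u)=0$ for all $u$; $\mathrm{Best}_{\mathsf B}(\Pi)=\max_{\text{valid }\mathsf B'}(1-\mathrm{val}(\mathsf A,\mathsf B'))$, where $\mathrm{val}$ is the expected common output. *)

theory Defs
  imports Main Complex_Main
begin

text \<open>An m-round single-bit-message protocol: nodes are bool lists of length at most m,
  the root is the empty list, the child of u along bit b is u @ [b].
  ctrl u = True means that party A controls node u (False: B controls it).
  e u b is the edge probability from u to u @ [b]; chi is the common output on leaves.\<close>

definition leaves :: "nat \<Rightarrow> bool list set" where
  "leaves m = {l. length l = m}"

definition well_formed :: "nat \<Rightarrow> (bool list \<Rightarrow> bool \<Rightarrow> real) \<Rightarrow> bool" where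
  "well_formed m e \<longleftrightarrow>
     (\<forall>u. length u < m \<longrightarrow> (\<forall>b. 0 \<le> e u b) \<and> e u True + e u False = 1)"

definition visit :: "(bool list \<Rightarrow> bool \<Rightarrow> real) \<Rightarrow> bool list \<Rightarrow> real" where
  "visit e u = (\<Prod>i<length u. e (take i u) (u ! i))"

definition expect_leaf :: "nat \<Rightarrow> (bool list \<Rightarrow> bool \<Rightarrow> real) \<Rightarrow> (bool list \<Rightarrow> real) \<Rightarrow> real" where
  "expect_leaf m e f = (\<Sum>l\<in>leaves m. visit e l * f l)"

text \<open>The subprotocol Pi_c lives on the subtree rooted at [c]:
  its control, edge probabilities and output are those of Pi shifted by the prefix c.
  Leaves of Pi_c are identified with leaves of Pi starting with c (we pass tl l).\<close>
fun domM :: "nat \<Rightarrow> (bool list \<Rightarrow> bool) \<Rightarrow> (bool list \<Rightarrow> bool \<Rightarrow> real)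
               \<Rightarrow> (bool list \<Rightarrow> bool) \<Rightarrow> bool list \<Rightarrow> real" where
  "domM 0 ctrl e chi l = of_bool (chi l)"
| "domM (Suc m) ctrl e chi l =
     (let b = hd l;
          Mc = (\<lambda>c. domM m (\<lambda>u. ctrl (c # u)) (\<lambda>u. e (c # u)) (\<lambda>u. chi (c # u)));
          mu = (\<lambda>c. expect_leaf m (\<lambda>u. e (c # u)) (Mc c))
      in if e [] b = 0 then 0
         else if e [] b = 1 then Mc b (tl l)
         else if ctrl [] \<or> mu b \<le> mu (\<not> b) then Mc b (tl l)
         else mu (\<not> b) / mu b * Mc b (tl l))"

text \<open>Edge probabilities of (A, B') for a deterministic B-strategy s (s u = child chosen at u).\<close>
definition strat_edges :: "(bool list \<Rightarrow> bool) \<Rightarrow> (bool list \<Rightarrow> bool \<Rightarrow> real)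
                             \<Rightarrow> (bool list \<Rightarrow> bool) \<Rightarrow> bool list \<Rightarrow> bool \<Rightarrow> real" where
  "strat_edges ctrl e s u b = (if ctrl u then e u b else of_bool (s u = b))"

definition valid_strat :: "nat \<Rightarrow> (bool list \<Rightarrow> bool) \<Rightarrow> (bool list \<Rightarrow> bool \<Rightarrow> real)
                             \<Rightarrow> (bool list \<Rightarrow> bool) \<Rightarrow> bool" where
  "valid_strat m ctrl e s \<longleftrightarrow>
     (\<forall>u. length u \<le> m \<longrightarrow> visit e u = 0 \<longrightarrow> visit (strat_edges ctrl e s) u = 0)"

definition val :: "nat \<Rightarrow> (bool list \<Rightarrow> bool \<Rightarrow> real) \<Rightarrow> (bool list \<Rightarrow> bool) \<Rightarrow> real" where
  "val m e chi = expect_leaf m e (\<lambda>l. of_bool (chi l))"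

definition Best_B :: "nat \<Rightarrow> (bool list \<Rightarrow> bool) \<Rightarrow> (bool list \<Rightarrow> bool \<Rightarrow> real)
                        \<Rightarrow> (bool list \<Rightarrow> bool) \<Rightarrow> real" where
  "Best_B m ctrl e chi =
     Max {1 - val m (strat_edges ctrl e s) chi | s. valid_strat m ctrl e s}"

end

theory Submission
  imports Defs
begin

text \<open>Backward induction on the number of rounds, proving separately that every valid
  B-strategy yields value at least \<open>\<mu> = E[M\<^sup>A]\<close> and that some valid strategy yields
  exactly \<open>\<mu>\<close>. At a node controlled by A the measure keeps the weight of every reachable
  child, so \<open>\<mu>\<close> is the edge-weighted average of the children's values, and B best-responds
  in each subtree. At a node controlled by B, rescaling the worse child \<open>b\<close> by
  \<open>\<mu>(\<not> b) / \<mu>(b)\<close> makes \<open>\<mu>\<close> the smaller value among the children of positive probability,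
  which is what B obtains by steering into that child; validity forbids steering into a
  child of probability 0.\<close>

abbreviation subtree :: "bool \<Rightarrow> (bool list \<Rightarrow> 'a) \<Rightarrow> bool list \<Rightarrow> 'a" where
  "subtree c f \<equiv> \<lambda>u. f (c # u)"

abbreviation expect_domM :: "nat \<Rightarrow> (bool list \<Rightarrow> bool) \<Rightarrow> (bool list \<Rightarrow> bool \<Rightarrow> real)
                               \<Rightarrow> (bool list \<Rightarrow> bool) \<Rightarrow> real" where
  "expect_domM m ctrl e chi \<equiv> expect_leaf m e (domM m ctrl e chi)"

lemma visit_Nil [simp]: "visit e [] = 1"
  by (simp add: visit_def)

lemma visit_Cons: "visit e (c # u) = e [] c * visit (subtree c e) u"
  unfolding visit_def length_Cons prod.lessThan_Suc_shift by simp

lemma expect_leaf_0: "expect_leaf 0 e f = f []"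
  by (simp add: expect_leaf_def leaves_def)

lemma expect_leaf_Suc:
  "expect_leaf (Suc m) e f = (\<Sum>c\<in>UNIV. e [] c * expect_leaf m (subtree c e) (subtree c f))"
proof -
  have leaves_Suc: "leaves (Suc m) = (\<lambda>(c, l). c # l) ` (UNIV \<times> leaves m)"
    by (auto simp: leaves_def image_iff length_Suc_conv)
  have "expect_leaf (Suc m) e f = (\<Sum>(c, l)\<in>UNIV \<times> leaves m. visit e (c # l) * f (c # l))"
    unfolding expect_leaf_def leaves_Suc
    by (subst sum.reindex) (auto simp: inj_on_def case_prod_beta)
  also have "\<dots> = (\<Sum>c\<in>UNIV. \<Sum>l\<in>leaves m. visit e (c # l) * f (c # l))"
    by (rule sum.cartesian_product[symmetric])
  finally show ?thesis
    by (simp add: expect_leaf_def visit_Cons sum_distrib_left mult.assoc)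
qed

lemma expect_leaf_cmult: "expect_leaf m e (\<lambda>l. k * f l) = k * expect_leaf m e f"
  by (simp add: expect_leaf_def sum_distrib_left mult.left_commute)

lemma expect_leaf_nonneg:
  assumes "well_formed m e" and "\<And>l. 0 \<le> f l"
  shows "0 \<le> expect_leaf m e f"
  using assms unfolding expect_leaf_def visit_def well_formed_def leaves_def
  by (auto intro!: sum_nonneg mult_nonneg_nonneg prod_nonneg)

lemma well_formed_subtree: "well_formed (Suc m) e \<Longrightarrow> well_formed m (subtree c e)"
  by (simp add: well_formed_def)

lemma strat_edges_subtree:
  "subtree c (strat_edges ctrl e s) = strat_edges (subtree c ctrl) (subtree c e) (subtree c s)"
  by (simp add: strat_edges_def fun_eq_iff)

lemma val_Suc: "val (Suc m) e chi = (\<Sum>c\<in>UNIV. e [] c * val m (subtree c e) (subtree c chi))"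
  by (simp add: val_def expect_leaf_Suc)

lemma valid_strat_Suc_iff:
  "valid_strat (Suc m) ctrl e s \<longleftrightarrow>
     (\<forall>c. e [] c = 0 \<longrightarrow> strat_edges ctrl e s [] c = 0) \<and>
     (\<forall>c. e [] c \<noteq> 0 \<longrightarrow> strat_edges ctrl e s [] c \<noteq> 0 \<longrightarrow>
          valid_strat m (subtree c ctrl) (subtree c e) (subtree c s))"
  (is "_ \<longleftrightarrow> ?root \<and> ?children")
proof
  assume valid: "valid_strat (Suc m) ctrl e s"
  have descend: "visit (strat_edges ctrl e s) (c # u) = 0"
    if "length u \<le> m" and "visit e (c # u) = 0" for c u
    using valid that unfolding valid_strat_def by simp
  show "?root \<and> ?children"
  proof
    show "?root"
      using descend[of "[]"] by (simp add: visit_Cons)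
    show "?children"
      using descend by (auto simp: valid_strat_def visit_Cons strat_edges_subtree)
  qed
next
  assume "?root \<and> ?children"
  then have root: "?root" and children: "?children"
    by blast+
  show "valid_strat (Suc m) ctrl e s"
    unfolding valid_strat_def
  proof (intro allI impI)
    fix u :: "bool list"
    assume "length u \<le> Suc m" and "visit e u = 0"
    then show "visit (strat_edges ctrl e s) u = 0"
    proof (cases u)
      case (Cons c u')
      with \<open>length u \<le> Suc m\<close> \<open>visit e u = 0\<close> show ?thesis
        using root children unfolding valid_strat_def
        by (cases "e [] c = 0"; cases "strat_edges ctrl e s [] c = 0")
           (auto simp: visit_Cons strat_edges_subtree)
    qed simp
  qed
qed

lemma domM_nonneg: "well_formed m e \<Longrightarrow> 0 \<le> domM m ctrl e chi l"
proof (induction m arbitrary: ctrl e chi l)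
  case (Suc m)
  then have "0 \<le> domM m (subtree c ctrl) (subtree c e) (subtree c chi) l'"
    and "0 \<le> expect_domM m (subtree c ctrl) (subtree c e) (subtree c chi)" for c l'
    by (simp_all add: well_formed_subtree expect_leaf_nonneg)
  then show ?case
    by (simp add: Let_def)
qed simp

lemma domM_Cons:
  fixes m ctrl e chi
  defines "mu \<equiv> \<lambda>c. expect_domM m (subtree c ctrl) (subtree c e) (subtree c chi)"
  shows "domM (Suc m) ctrl e chi (c # l) =
    (if e [] c = 0 then 0
     else if e [] c = 1 \<or> ctrl [] \<or> mu c \<le> mu (\<not> c) then 1
     else mu (\<not> c) / mu c) * domM m (subtree c ctrl) (subtree c e) (subtree c chi) l"
  by (simp add: mu_def Let_def)

lemma expect_domM_Suc:
  fixes m ctrl e chi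
  defines "mu \<equiv> \<lambda>c. expect_domM m (subtree c ctrl) (subtree c e) (subtree c chi)"
  shows "expect_domM (Suc m) ctrl e chi =
    (\<Sum>c\<in>UNIV. e [] c *
       ((if e [] c = 0 then 0
         else if e [] c = 1 \<or> ctrl [] \<or> mu c \<le> mu (\<not> c) then 1
         else mu (\<not> c) / mu c) * mu c))"
  unfolding expect_leaf_Suc domM_Cons expect_leaf_cmult mu_def ..

lemma expect_domM_Suc_ctrlA:
  assumes "ctrl []"
  shows "expect_domM (Suc m) ctrl e chi =
    (\<Sum>c\<in>UNIV. e [] c * expect_domM m (subtree c ctrl) (subtree c e) (subtree c chi))"
  unfolding expect_domM_Suc using assms by (auto intro: sum.cong)

lemma expect_domM_Suc_ctrlB:
  fixes m ctrl e chi
  defines "mu \<equiv> \<lambda>c. expect_domM m (subtree c ctrl) (subtree c e) (subtree c chi)"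
  assumes "well_formed (Suc m) e" and "\<not> ctrl []"
  shows "expect_domM (Suc m) ctrl e chi =
    (if e [] True = 0 then mu False else if e [] False = 0 then mu True
     else min (mu True) (mu False))"
proof -
  have e: "0 \<le> e [] c" "e [] True + e [] False = 1" for c
    using assms(2) by (auto simp: well_formed_def)
  have mu_nonneg: "0 \<le> mu c" for c
    unfolding mu_def using assms(2) by (simp add: well_formed_subtree expect_leaf_nonneg domM_nonneg)
  have average: "x * e [] False + x * e [] True = x" for x
    using e(2) by (simp add: distrib_left[symmetric])
  have "expect_domM (Suc m) ctrl e chi =
    (\<Sum>c\<in>UNIV. e [] c *
       ((if e [] c = 0 then 0
         else if e [] c = 1 \<or> ctrl [] \<or> mu c \<le> mu (\<not> c) then 1
         else mu (\<not> c) / mu c) * mu c))"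
    unfolding mu_def by (rule expect_domM_Suc)
  then show ?thesis
    using e average mu_nonneg[of True] mu_nonneg[of False] assms(3)
    by (auto simp: UNIV_bool field_simps min_def)
qed

lemma expect_domM_le_val:
  assumes "well_formed m e" and "valid_strat m ctrl e s"
  shows "expect_domM m ctrl e chi \<le> val m (strat_edges ctrl e s) chi"
  using assms
proof (induction m arbitrary: ctrl e s chi)
  case 0
  then show ?case by (simp add: val_def expect_leaf_0)
next
  case (Suc m)
  let ?mu = "\<lambda>c. expect_domM m (subtree c ctrl) (subtree c e) (subtree c chi)"
  let ?val = "\<lambda>c. val m (strat_edges (subtree c ctrl) (subtree c e) (subtree c s)) (subtree c chi)"
  have child: "?mu c \<le> ?val c" if "e [] c \<noteq> 0" and "strat_edges ctrl e s [] c \<noteq> 0" for c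
    using Suc that by (simp add: valid_strat_Suc_iff well_formed_subtree)
  have val: "val (Suc m) (strat_edges ctrl e s) chi = (\<Sum>c\<in>UNIV. strat_edges ctrl e s [] c * ?val c)"
    by (simp add: val_Suc strat_edges_subtree)
  show ?case
  proof (cases "ctrl []")
    case True
    have "e [] c * ?mu c \<le> strat_edges ctrl e s [] c * ?val c" for c
      using True child[of c] Suc.prems(1)
      by (cases "e [] c = 0") (auto simp: strat_edges_def well_formed_def intro: mult_left_mono)
    then show ?thesis
      unfolding val expect_domM_Suc_ctrlA[where ctrl = ctrl, OF True] by (rule sum_mono)
  next
    case False
    define b where "b = s []"
    have root: "strat_edges ctrl e s [] c = of_bool (c = b)" for c
      using False by (auto simp: strat_edges_def b_def)
    then have "e [] b \<noteq> 0"
      using Suc.prems(2) by (auto simp: valid_strat_Suc_iff)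
    then have "expect_domM (Suc m) ctrl e chi \<le> ?mu b"
      using expect_domM_Suc_ctrlB[where ctrl = ctrl, OF Suc.prems(1) False] by (cases b) auto
    also have "\<dots> \<le> ?val b"
      using child \<open>e [] b \<noteq> 0\<close> root by simp
    also have "\<dots> = val (Suc m) (strat_edges ctrl e s) chi"
      unfolding val root by (cases b) (simp_all add: UNIV_bool)
    finally show ?thesis .
  qed
qed

lemma expect_domM_attained:
  assumes "well_formed m e"
  shows "\<exists>s. valid_strat m ctrl e s \<and> val m (strat_edges ctrl e s) chi = expect_domM m ctrl e chi"
  using assms
proof (induction m arbitrary: ctrl e chi)
  case 0
  then show ?case by (simp add: val_def expect_leaf_0 valid_strat_def)
next
  case (Suc m)
  let ?mu = "\<lambda>c. expect_domM m (subtree c ctrl) (subtree c e) (subtree c chi)"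
  have "\<forall>c. \<exists>s. valid_strat m (subtree c ctrl) (subtree c e) s \<and>
                 val m (strat_edges (subtree c ctrl) (subtree c e) s) (subtree c chi) = ?mu c"
    using Suc.IH well_formed_subtree[OF Suc.prems] by blast
  then obtain S where S: "\<And>c. valid_strat m (subtree c ctrl) (subtree c e) (S c)"
    "\<And>c. val m (strat_edges (subtree c ctrl) (subtree c e) (S c)) (subtree c chi) = ?mu c"
    by metis
  obtain b where "e [] b \<noteq> 0" and b_best: "\<not> ctrl [] \<Longrightarrow> expect_domM (Suc m) ctrl e chi = ?mu b"
  proof -
    define b where "b = (if e [] True = 0 then False else if e [] False = 0 then True
                         else ?mu True \<le> ?mu False)"
    have "e [] True + e [] False = 1"
      using Suc.prems by (simp add: well_formed_def)
    then have "e [] b \<noteq> 0"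
      by (cases "?mu True \<le> ?mu False") (auto simp: b_def)
    moreover have "expect_domM (Suc m) ctrl e chi = ?mu b" if "\<not> ctrl []"
      using expect_domM_Suc_ctrlB[where ctrl = ctrl, OF Suc.prems that] by (simp add: b_def min_def)
    ultimately show thesis
      by (rule that)
  qed
  define s where "s u = (case u of [] \<Rightarrow> b | c # u' \<Rightarrow> S c u')" for u
  have root: "strat_edges ctrl e s [] c = (if ctrl [] then e [] c else of_bool (c = b))" for c
    by (auto simp: strat_edges_def s_def)
  have subtree_s: "subtree c s = S c" for c
    by (simp add: s_def)
  have "strat_edges ctrl e s [] c = 0" if "e [] c = 0" for c
    using that \<open>e [] b \<noteq> 0\<close> by (cases "c = b") (auto simp: root)
  then have "valid_strat (Suc m) ctrl e s"
    unfolding valid_strat_Suc_iff subtree_s using S(1) by blast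
  moreover have "val (Suc m) (strat_edges ctrl e s) chi = expect_domM (Suc m) ctrl e chi"
  proof (cases "ctrl []")
    case True
    then show ?thesis
      by (simp add: val_Suc strat_edges_subtree subtree_s S(2) root expect_domM_Suc_ctrlA)
  next
    case False
    then show ?thesis
      using b_best by (cases b) (simp_all add: val_Suc strat_edges_subtree subtree_s S(2) root UNIV_bool)
  qed
  ultimately show ?case by blast
qed

lemma val_strat_edges_restrict:
  "val m (strat_edges ctrl e s) chi = val m (strat_edges ctrl e (\<lambda>u. s u \<and> length u < m)) chi"
proof -
  have "visit (strat_edges ctrl e s) l = visit (strat_edges ctrl e (\<lambda>u. s u \<and> length u < m)) l"
    if "l \<in> leaves m" for l
    using that unfolding visit_def leaves_def by (intro prod.cong) (auto simp: strat_edges_def)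
  then show ?thesis
    unfolding val_def expect_leaf_def by simp
qed

lemma finite_strategy_values:
  "finite {1 - val m (strat_edges ctrl e s) chi | s. valid_strat m ctrl e s}"
proof (rule finite_subset)
  show "{1 - val m (strat_edges ctrl e s) chi | s. valid_strat m ctrl e s}
        \<subseteq> (\<lambda>A. 1 - val m (strat_edges ctrl e (\<lambda>u. u \<in> A)) chi) ` Pow {u. length u < m}"
  proof
    fix x
    assume "x \<in> {1 - val m (strat_edges ctrl e s) chi | s. valid_strat m ctrl e s}"
    then obtain s where "x = 1 - val m (strat_edges ctrl e s) chi"
      by blast
    then have "x = 1 - val m (strat_edges ctrl e (\<lambda>u. u \<in> {u. s u \<and> length u < m})) chi"
      by (simp add: val_strat_edges_restrict[of m ctrl e s])
    then show "x \<in> (\<lambda>A. 1 - val m (strat_edges ctrl e (\<lambda>u. u \<in> A)) chi) ` Pow {u. length u < m}"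
      by blast
  qed
  have "finite {u :: bool list. length u < m}"
    by (rule finite_subset[OF _ finite_lists_length_le[of UNIV m]]) auto
  then show "finite ((\<lambda>A. 1 - val m (strat_edges ctrl e (\<lambda>u. u \<in> A)) chi) ` Pow {u. length u < m})"
    by simp
qed

theorem lemma3p12:
  fixes m :: nat and ctrl :: "bool list \<Rightarrow> bool"
    and e :: "bool list \<Rightarrow> bool \<Rightarrow> real" and chi :: "bool list \<Rightarrow> bool"
  assumes "well_formed m e"
  shows "Best_B m ctrl e chi = 1 - expect_leaf m e (domM m ctrl e chi)"
proof -
  obtain s where "valid_strat m ctrl e s" and "val m (strat_edges ctrl e s) chi = expect_domM m ctrl e chi"
    using expect_domM_attained[OF assms] by blast
  then have "1 - expect_domM m ctrl e chi \<in> {1 - val m (strat_edges ctrl e s) chi | s. valid_strat m ctrl e s}"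
    by force
  moreover have "y \<le> 1 - expect_domM m ctrl e chi"
    if "y \<in> {1 - val m (strat_edges ctrl e s) chi | s. valid_strat m ctrl e s}" for y
    using that expect_domM_le_val[OF assms] by auto
  ultimately show ?thesis
    unfolding Best_B_def by (intro Max_eqI finite_strategy_values)
qed

end
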